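(* Let $E$ be a biordered set satisfying: (E1) there exists $0\in E$ with $0\,\omega\,e$ for every $e\in E$; (E2) there is a map $e\mapsto e'$ on $E$ such that for all $e,f\in E$: (i) $(e')'=e$; (ii) $f\,\omega^l\,e$ iff $e'\,\omega^r\,f'$; (iii) $f\,\omega^l\,e'$ iff $M(f,e)=\{0\}$. Then also: (i) there exists $1\in E$ such that $e\,\omega\,1$ for every $e\in E$; (ii) for $e,f\in E$, $f\,\omega^r\,e$ if and only if $e'\,\omega^l\,f'$; (iii) for $e,f\in E$, $f\,\omega^r\,e'$ if and only if $M(e,f)=\{0\}$.
   Context: A biordered set is a partial algebra as in Nambooripad's theory; e.g. the set of idempotents $E(S)$ of a semigroup $S$ with product $ef$ (computed in $S$) defined when $\{ef,fe\}\cap\{e,f\}\ne\emptyset$. In $E$: $\omega^l=\{(e,f): ef=e\}$, $\omega^r=\{(e,f): fe=e\}$, $\omega=\omega^l\cap\omega^r$, and $M(e,f)=\{g\in E: g\,\omega^l\,e,\ g\,\omega^r\,f\}$. *)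

theory Defs
  imports Main
begin

text \<open>A biordered set in the sense of Nambooripad: a carrier set E with a partial
binary operation, represented by a domain D \<subseteq> E \<times> E and a total function mul
whose values are only relevant on D.\<close>

definition omega_l :: "('a \<times> 'a) set \<Rightarrow> ('a \<Rightarrow> 'a \<Rightarrow> 'a) \<Rightarrow> 'a \<Rightarrow> 'a \<Rightarrow> bool" where
  "omega_l D m e f \<longleftrightarrow> (e, f) \<in> D \<and> m e f = e"

definition omega_r :: "('a \<times> 'a) set \<Rightarrow> ('a \<Rightarrow> 'a \<Rightarrow> 'a) \<Rightarrow> 'a \<Rightarrow> 'a \<Rightarrow> bool" where
  "omega_r D m e f \<longleftrightarrow> (f, e) \<in> D \<and> m f e = e"

definition omega :: "('a \<times> 'a) set \<Rightarrow> ('a \<Rightarrow> 'a \<Rightarrow> 'a) \<Rightarrow> 'a \<Rightarrow> 'a \<Rightarrow> bool" where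
  "omega D m e f \<longleftrightarrow> omega_l D m e f \<and> omega_r D m e f"

definition rel_R :: "('a \<times> 'a) set \<Rightarrow> ('a \<Rightarrow> 'a \<Rightarrow> 'a) \<Rightarrow> 'a \<Rightarrow> 'a \<Rightarrow> bool" where
  "rel_R D m e f \<longleftrightarrow> omega_r D m e f \<and> omega_r D m f e"

definition rel_L :: "('a \<times> 'a) set \<Rightarrow> ('a \<Rightarrow> 'a \<Rightarrow> 'a) \<Rightarrow> 'a \<Rightarrow> 'a \<Rightarrow> bool" where
  "rel_L D m e f \<longleftrightarrow> omega_l D m e f \<and> omega_l D m f e"

definition Mset :: "'a set \<Rightarrow> ('a \<times> 'a) set \<Rightarrow> ('a \<Rightarrow> 'a \<Rightarrow> 'a) \<Rightarrow> 'a \<Rightarrow> 'a \<Rightarrow> 'a set" where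
  "Mset E D m e f = {g \<in> E. omega_l D m g e \<and> omega_r D m g f}"

definition biordered_set :: "'a set \<Rightarrow> ('a \<times> 'a) set \<Rightarrow> ('a \<Rightarrow> 'a \<Rightarrow> 'a) \<Rightarrow> bool" where
  "biordered_set E D m \<longleftrightarrow>
    D \<subseteq> E \<times> E \<and>
    (\<forall>(e, f) \<in> D. m e f \<in> E) \<and>
    \<comment> \<open>(B1)\<close>
    (\<forall>e\<in>E. omega_l D m e e \<and> omega_r D m e e) \<and>
    (\<forall>e\<in>E. \<forall>f\<in>E. \<forall>g\<in>E. omega_l D m e f \<and> omega_l D m f g \<longrightarrow> omega_l D m e g) \<and>
    (\<forall>e\<in>E. \<forall>f\<in>E. \<forall>g\<in>E. omega_r D m e f \<and> omega_r D m f g \<longrightarrow> omega_r D m e g) \<and>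
    D = {(e, f). e \<in> E \<and> f \<in> E \<and> (omega_r D m e f \<or> omega_l D m e f \<or> omega_r D m f e \<or> omega_l D m f e)} \<and>
    \<comment> \<open>(B21), (B21*)\<close>
    (\<forall>e\<in>E. \<forall>f\<in>E. omega_r D m f e \<longrightarrow> rel_R D m f (m f e) \<and> omega D m (m f e) e) \<and>
    (\<forall>e\<in>E. \<forall>f\<in>E. omega_l D m f e \<longrightarrow> rel_L D m f (m e f) \<and> omega D m (m e f) e) \<and>
    \<comment> \<open>(B22), (B22*)\<close>
    (\<forall>e\<in>E. \<forall>f\<in>E. \<forall>g\<in>E. omega_l D m g f \<and> omega_r D m f e \<and> omega_r D m g e
        \<longrightarrow> omega_l D m (m g e) (m f e)) \<and>
    (\<forall>e\<in>E. \<forall>f\<in>E. \<forall>g\<in>E. omega_r D m g f \<and> omega_l D m f e \<and> omega_l D m g e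
        \<longrightarrow> omega_r D m (m e g) (m e f)) \<and>
    \<comment> \<open>(B31), (B31*)\<close>
    (\<forall>e\<in>E. \<forall>f\<in>E. \<forall>g\<in>E. omega_r D m g f \<and> omega_r D m f e \<longrightarrow> m g f = m (m g e) f) \<and>
    (\<forall>e\<in>E. \<forall>f\<in>E. \<forall>g\<in>E. omega_l D m g f \<and> omega_l D m f e \<longrightarrow> m f g = m f (m e g)) \<and>
    \<comment> \<open>(B32), (B32*)\<close>
    (\<forall>e\<in>E. \<forall>f\<in>E. \<forall>g\<in>E. omega_l D m g f \<and> omega_r D m f e \<and> omega_r D m g e
        \<longrightarrow> m (m f g) e = m (m f e) (m g e)) \<and>
    (\<forall>e\<in>E. \<forall>f\<in>E. \<forall>g\<in>E. omega_r D m g f \<and> omega_l D m f e \<and> omega_l D m g e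
        \<longrightarrow> m e (m g f) = m (m e g) (m e f)) \<and>
    \<comment> \<open>(B4), (B4*)\<close>
    (\<forall>e\<in>E. \<forall>f\<in>E. \<forall>g\<in>E. omega_r D m f e \<and> omega_r D m g e \<and> omega_r D m (m f e) (m g e)
        \<longrightarrow> (\<exists>g1\<in>E. omega D m g1 g \<and> omega_r D m f g1 \<and> m g1 e = m f e)) \<and>
    (\<forall>e\<in>E. \<forall>f\<in>E. \<forall>g\<in>E. omega_l D m f e \<and> omega_l D m g e \<and> omega_l D m (m e f) (m e g)
        \<longrightarrow> (\<exists>g1\<in>E. omega D m g1 g \<and> omega_l D m f g1 \<and> m e g1 = m e f))"

end

theory Submission
  imports Defs
begin

text \<open>Conjugating (E2)(ii) by the involution gives its dual (ii). Since
\<open>M(e, 0) = {0}\<close> for every \<open>e\<close>, (E2)(iii) gives \<open>e \<omega>\<^sup>l 0'\<close>, and the dual (ii) turns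
\<open>0 \<omega>\<^sup>l e'\<close> into \<open>e \<omega>\<^sup>r 0'\<close>; hence \<open>1 = 0'\<close> is a top element. Finally (iii) is (E2)(iii)
rewritten by the dual (ii).\<close>

lemma involution_transfers_dual_iff:
  assumes closed: "\<forall>e\<in>E. c e \<in> E"
    and involutive: "\<forall>e\<in>E. c (c e) = e"
    and dual: "\<forall>e\<in>E. \<forall>f\<in>E. P f e \<longleftrightarrow> Q (c e) (c f)"
  shows "\<forall>e\<in>E. \<forall>f\<in>E. Q f e \<longleftrightarrow> P (c e) (c f)"
proof (intro ballI)
  fix e f assume "e \<in> E" "f \<in> E"
  then have "P (c e) (c f) \<longleftrightarrow> Q (c (c f)) (c (c e))"
    using closed dual by blast
  then show "Q f e \<longleftrightarrow> P (c e) (c f)"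
    using involutive \<open>e \<in> E\<close> \<open>f \<in> E\<close> by simp
qed

lemma Mset_bottom:
  assumes "z \<in> E" "\<forall>f\<in>E. omega D m z f" "e \<in> E"
  shows "Mset E D m e z = {z}"
proof
  show "Mset E D m e z \<subseteq> {z}"
  proof
    fix g assume "g \<in> Mset E D m e z"
    then have "g \<in> E" "m z g = g"
      unfolding Mset_def omega_r_def by auto
    moreover have "m z g = z" if "g \<in> E"
      using assms(2) that unfolding omega_def omega_l_def by auto
    ultimately show "g \<in> {z}" by simp
  qed
  show "{z} \<subseteq> Mset E D m e z"
    using assms unfolding Mset_def omega_def by auto
qed

theorem lemma3p2:
  fixes E :: "'a set" and D :: "('a \<times> 'a) set" and m :: "'a \<Rightarrow> 'a \<Rightarrow> 'a"
    and z :: 'a and c :: "'a \<Rightarrow> 'a"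
  assumes bio: "biordered_set E D m"
    and E1: "z \<in> E" "\<forall>e\<in>E. omega D m z e"
    and E2: "\<forall>e\<in>E. c e \<in> E"
      "\<forall>e\<in>E. c (c e) = e"
      "\<forall>e\<in>E. \<forall>f\<in>E. omega_l D m f e \<longleftrightarrow> omega_r D m (c e) (c f)"
      "\<forall>e\<in>E. \<forall>f\<in>E. omega_l D m f (c e) \<longleftrightarrow> Mset E D m f e = {z}"
  shows "(\<exists>u\<in>E. \<forall>e\<in>E. omega D m e u)
    \<and> (\<forall>e\<in>E. \<forall>f\<in>E. omega_r D m f e \<longleftrightarrow> omega_l D m (c e) (c f))
    \<and> (\<forall>e\<in>E. \<forall>f\<in>E. omega_r D m f (c e) \<longleftrightarrow> Mset E D m e f = {z})"
proof -
  have dual: "\<forall>e\<in>E. \<forall>f\<in>E. omega_r D m f e \<longleftrightarrow> omega_l D m (c e) (c f)"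
    using involution_transfers_dual_iff[OF E2(1-3)] .
  have top: "omega D m e (c z)" if "e \<in> E" for e
  proof -
    have "omega_l D m e (c z)"
      using E2(4) Mset_bottom[OF E1 that] E1(1) that by blast
    moreover have "omega_l D m (c (c z)) (c e)"
      using E1 E2(1,2) that unfolding omega_def by simp
    then have "omega_r D m e (c z)"
      using dual E1(1) E2(1) that by blast
    ultimately show ?thesis unfolding omega_def by simp
  qed
  have "omega_r D m f (c e) \<longleftrightarrow> Mset E D m e f = {z}" if "e \<in> E" "f \<in> E" for e f
    using dual[rule_format, of "c e" f] E2(4)[rule_format, of f e] E2(1,2) that by simp
  then show ?thesis
    using dual top E1(1) E2(1) by blast
qed

end
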